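(* Let $q>2$ be a prime power and $\ell>1$ an integer. The ideal $I_\ell := \langle x_{i+1}^{q-1}+1-(x_i+1)^{q-1} : i=1,\dots,\ell-1\rangle \subseteq \mathbb{F}_q[x_1,\dots,x_\ell]$ is a prime ideal, and the ideal $I'_\ell := \langle x_{i+1}^{q-1}+z^{q-1}-(x_i+z)^{q-1} : i=1,\dots,\ell-1\rangle \subseteq \mathbb{F}_q[x_1,\dots,x_\ell,z]$ is a homogeneous prime ideal which equals the homogenization of $I_\ell$ (with respect to the variable $z$).
   Context: $\mathbb{F}_q$ denotes the finite field with $q$ elements. The homogenization of an ideal $I\subseteq \mathbb{F}_q[x_1,\dots,x_\ell]$ is the ideal of $\mathbb{F}_q[x_1,\dots,x_\ell,z]$ generated by the homogenizations $z^{\deg f} f(x_1/z,\dots,x_\ell/z)$ of all $f\in I$. *)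

theory Defs
  imports "HOL-Library.Poly_Mapping" "HOL-Algebra.Ideal"
begin

text \<open>Convention: variable index 0 is z, variable index i (i = 1..l) is x_i.\<close>

type_synonym 'a mpoly = "(nat \<Rightarrow>\<^sub>0 nat) \<Rightarrow>\<^sub>0 'a"

definition mvars :: "'a::zero mpoly \<Rightarrow> nat set" where
  "mvars p = (\<Union>m\<in>Poly_Mapping.keys p. Poly_Mapping.keys m)"

definition Var :: "nat \<Rightarrow> 'a::comm_ring_1 mpoly" where
  "Var i = Poly_Mapping.single (Poly_Mapping.single i 1) 1"

definition poly_ring :: "nat set \<Rightarrow> ('a::comm_ring_1 mpoly) ring" where
  "poly_ring V = \<lparr>carrier = {p. mvars p \<subseteq> V}, monoid.mult = (*), one = 1,
                  zero = 0, add = (+)\<rparr>"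

definition mon_deg :: "(nat \<Rightarrow>\<^sub>0 nat) \<Rightarrow> nat" where
  "mon_deg m = (\<Sum>i\<in>Poly_Mapping.keys m. Poly_Mapping.lookup m i)"

definition total_deg :: "'a::zero mpoly \<Rightarrow> nat" where
  "total_deg p = (if p = 0 then 0 else Max (mon_deg ` Poly_Mapping.keys p))"

definition homogeneous :: "'a::zero mpoly \<Rightarrow> bool" where
  "homogeneous p \<longleftrightarrow> (\<forall>m\<in>Poly_Mapping.keys p. mon_deg m = total_deg p)"

text \<open>Homogenization with respect to the variable z (index 0):
  z^(deg f) f(x/z).\<close>
definition homogenize :: "'a::comm_ring_1 mpoly \<Rightarrow> 'a mpoly" where
  "homogenize p = (\<Sum>m\<in>Poly_Mapping.keys p.
      Poly_Mapping.single (m + Poly_Mapping.single 0 (total_deg p - mon_deg m)) (Poly_Mapping.lookup p m))"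

definition homogeneous_ideal :: "('a::comm_ring_1 mpoly) ring \<Rightarrow> 'a mpoly set \<Rightarrow> bool" where
  "homogeneous_ideal R I \<longleftrightarrow> ideal I R \<and>
     (\<exists>G. G \<subseteq> carrier R \<and> (\<forall>g\<in>G. homogeneous g) \<and> I = genideal R G)"

definition homogenization_ideal ::
  "('a::comm_ring_1 mpoly) ring \<Rightarrow> 'a mpoly set \<Rightarrow> 'a mpoly set" where
  "homogenization_ideal R I = genideal R (homogenize ` I)"

end

theory Submission
  imports Defs "HOL-Computational_Algebra.Formal_Power_Series" "HOL-Computational_Algebra.Polynomial"
begin

unbundle fps_syntax

text \<open>Put \<open>k = q - 1\<close>, which is \<open>-1 \<noteq> 0\<close> in \<open>\<bbbF>\<^sub>q\<close>. Extracting \<open>k\<close>-th roots in \<open>\<bbbF>\<^sub>q[[t]]\<close> gives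
  series \<open>X\<^sub>l = t, X\<^sub>l\<^sub>-\<^sub>1, \<dots>, X\<^sub>1\<close> with \<open>(1 + X\<^sub>i)\<^sup>k = 1 + X\<^sub>i\<^sub>+\<^sub>1\<^sup>k\<close>, where \<open>X\<^sub>i\<close> has order \<open>k\<^bsup>l-i\<^esup>\<close>.
  Modulo the generators every polynomial reduces to one in which \<open>x\<^sub>2, \<dots>, x\<^sub>l\<close> occur with
  exponents below \<open>k\<close>. The images of these reduced monomials under \<open>x\<^sub>i \<mapsto> X\<^sub>i\<close> have pairwise
  distinct orders (their exponents are the base-\<open>k\<close> digits of the order), hence are linearly
  independent. So \<open>I\<^sub>\<ell>\<close> is the kernel of a map into the domain \<open>\<bbbF>\<^sub>q[[t]]\<close> and thus prime. The same
  argument, applied degree by degree to \<open>x\<^sub>i \<mapsto> X\<^sub>i s, z \<mapsto> s\<close> into \<open>\<bbbF>\<^sub>q[[t]][s]\<close>, shows that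
  \<open>I'\<^sub>\<ell>\<close> is prime. Homogenization maps the first kernel into the second, and the generators of
  \<open>I'\<^sub>\<ell>\<close> are the homogenized generators of \<open>I\<^sub>\<ell>\<close>; this gives the equality.\<close>

section \<open>Variables, degrees and the rings \<open>poly_ring V\<close>\<close>

lemma keys_add_nat:
  "Poly_Mapping.keys (a + b :: 'x \<Rightarrow>\<^sub>0 nat) = Poly_Mapping.keys a \<union> Poly_Mapping.keys b"
  by (auto simp: in_keys_iff lookup_add)

lemma mvars_add: "mvars (p + q) \<subseteq> mvars p \<union> mvars q"
  using keys_add[of p q] by (auto simp: mvars_def)

lemma mvars_uminus [simp]: "mvars (- p) = mvars p"
  by (simp add: mvars_def)

lemma mvars_diff: "mvars (p - q) \<subseteq> mvars p \<union> mvars q"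
  using keys_diff[of p q] by (auto simp: mvars_def)

lemma mvars_mult: "mvars (p * q) \<subseteq> mvars p \<union> mvars q"
proof
  fix i assume "i \<in> mvars (p * q)"
  then obtain m where m: "m \<in> Poly_Mapping.keys (p * q)" "i \<in> Poly_Mapping.keys m"
    by (auto simp: mvars_def)
  then obtain a b where "m = a + b" "a \<in> Poly_Mapping.keys p" "b \<in> Poly_Mapping.keys q"
    using keys_mult[of p q] by blast
  then show "i \<in> mvars p \<union> mvars q"
    using m(2) by (auto simp: mvars_def keys_add_nat)
qed

lemma mvars_zero [simp]: "mvars 0 = {}"
  by (simp add: mvars_def)

lemma mvars_one [simp]: "mvars 1 = {}"
  by (simp add: mvars_def)

lemma mvars_single: "mvars (Poly_Mapping.single m c) \<subseteq> Poly_Mapping.keys m"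
  by (simp add: mvars_def)

lemma mvars_Var [simp]: "mvars (Var i :: 'a::comm_ring_1 mpoly) = {i}"
  by (simp add: mvars_def Var_def)

lemma mvars_power: "mvars (p ^ n) \<subseteq> mvars p"
proof (induction n)
  case (Suc n)
  then show ?case using mvars_mult[of p "p ^ n"] by auto
qed simp

lemma mvars_sum: "mvars (sum f A) \<subseteq> (\<Union>a\<in>A. mvars (f a))"
proof (induction A rule: infinite_finite_induct)
  case (insert x F)
  then show ?case using mvars_add[of "f x" "sum f F"] by auto
qed auto

lemma carrier_poly_ring [simp]: "carrier (poly_ring V) = {p. mvars p \<subseteq> V}"
  and add_poly_ring [simp]: "add (poly_ring V) = (+)"
  and mult_poly_ring [simp]: "monoid.mult (poly_ring V) = (*)"
  and one_poly_ring [simp]: "one (poly_ring V) = 1"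
  and zero_poly_ring [simp]: "zero (poly_ring V) = 0"
  by (simp_all add: poly_ring_def)

lemma cring_poly_ring: "cring (poly_ring V :: 'a::comm_ring_1 mpoly ring)"
proof (rule cringI)
  show "abelian_group (poly_ring V :: 'a mpoly ring)"
  proof (rule abelian_groupI, goal_cases)
    case (1 x y)
    then show ?case using mvars_add[of x y] by auto
  next
    case (6 x)
    then show ?case by (intro bexI[of _ "- x"]) auto
  qed (simp_all add: add.assoc add.commute)
  show "comm_monoid (poly_ring V :: 'a mpoly ring)"
  proof (rule comm_monoidI, goal_cases)
    case (1 x y)
    then show ?case using mvars_mult[of x y] by auto
  qed (auto simp: mult.assoc mult.commute)
qed (simp add: distrib_right)

lemma a_inv_poly_ring:
  assumes "x \<in> carrier (poly_ring V)"
  shows "a_inv (poly_ring V) x = - (x :: 'a::comm_ring_1 mpoly)"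
proof -
  interpret cring "poly_ring V :: 'a mpoly ring" by (rule cring_poly_ring)
  show ?thesis using assms by (intro minus_equality) auto
qed

context
  fixes J :: "'a::comm_ring_1 mpoly set" and V :: "nat set"
  assumes J: "ideal J (poly_ring V)"
begin

lemma poly_ideal_zero: "0 \<in> J"
  using additive_subgroup.zero_closed[OF ideal.axioms(1)[OF J]] by simp

lemma poly_ideal_add: "x \<in> J \<Longrightarrow> y \<in> J \<Longrightarrow> x + y \<in> J"
  using additive_subgroup.a_closed[OF ideal.axioms(1)[OF J]] by fastforce

lemma poly_ideal_mult: "x \<in> J \<Longrightarrow> mvars y \<subseteq> V \<Longrightarrow> y * x \<in> J"
  using ideal.I_l_closed[OF J, of x y] by simp

lemma poly_ideal_sum: "(\<And>a. a \<in> A \<Longrightarrow> f a \<in> J) \<Longrightarrow> sum f A \<in> J"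
  by (induction A rule: infinite_finite_induct) (auto simp: poly_ideal_zero poly_ideal_add)

end

lemma Var_power: "(Var j :: 'a::comm_ring_1 mpoly) ^ n = Poly_Mapping.single (Poly_Mapping.single j n) 1"
proof (induction n)
  case (Suc n)
  have "(Var j :: 'a mpoly) ^ Suc n = Var j * Poly_Mapping.single (Poly_Mapping.single j n) 1"
    using Suc by simp
  also have "\<dots> = Poly_Mapping.single (Poly_Mapping.single j 1 + Poly_Mapping.single j n) 1"
    by (simp add: Var_def mult_single)
  finally show ?case by (simp add: single_add[symmetric])
qed simp

lemma mpoly_eq_sum_single:
  "p = (\<Sum>m\<in>Poly_Mapping.keys p. Poly_Mapping.single m (Poly_Mapping.lookup p m))"
  by (rule poly_mapping_eqI) (simp add: lookup_sum lookup_single when_def in_keys_iff)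

text \<open>\<open>Poly_Mapping.single 0 c\<close> is the constant polynomial \<open>c\<close>.\<close>

lemma keys_const_mult: "Poly_Mapping.keys (Poly_Mapping.single 0 c * r) \<subseteq> Poly_Mapping.keys r"
  using keys_mult[of "Poly_Mapping.single 0 c" r] by (auto split: if_splits)

lemma mvars_const_mult: "mvars (Poly_Mapping.single 0 c * r) \<subseteq> mvars r"
  using keys_const_mult by (force simp: mvars_def)

lemma of_nat_single_mult:
  "of_nat c * Poly_Mapping.single m 1 = (Poly_Mapping.single m (of_nat c) :: 'a::comm_ring_1 mpoly)"
proof -
  have "of_nat c * Poly_Mapping.single m 1
      = Poly_Mapping.single 0 (of_nat c) * (Poly_Mapping.single m 1 :: 'a mpoly)"
    by simp
  also have "\<dots> = Poly_Mapping.single (0 + m) (of_nat c * 1)"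
    by (simp only: mult_single)
  finally show ?thesis by simp
qed

lemma mon_deg_eq_sum:
  assumes "finite S" "Poly_Mapping.keys m \<subseteq> S"
  shows "mon_deg m = (\<Sum>i\<in>S. Poly_Mapping.lookup m i)"
  unfolding mon_deg_def using assms
  by (intro sum.mono_neutral_left) (auto simp: in_keys_iff)

lemma mon_deg_add: "mon_deg (a + b) = mon_deg a + mon_deg b"
proof -
  let ?S = "Poly_Mapping.keys a \<union> Poly_Mapping.keys b"
  have "mon_deg (a + b) = (\<Sum>i\<in>?S. Poly_Mapping.lookup (a + b) i)"
    by (rule mon_deg_eq_sum) (auto simp: keys_add_nat)
  also have "\<dots> = (\<Sum>i\<in>?S. Poly_Mapping.lookup a i) + (\<Sum>i\<in>?S. Poly_Mapping.lookup b i)"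
    by (simp add: lookup_add sum.distrib)
  also have "\<dots> = mon_deg a + mon_deg b"
    by (subst (1 2) mon_deg_eq_sum[of ?S]) auto
  finally show ?thesis .
qed

lemma mon_deg_zero [simp]: "mon_deg 0 = 0"
  and mon_deg_single [simp]: "mon_deg (Poly_Mapping.single j n) = n"
  by (simp_all add: mon_deg_def)

definition var_degree_le :: "nat \<Rightarrow> nat \<Rightarrow> 'a::zero mpoly \<Rightarrow> bool" where
  "var_degree_le i d p \<longleftrightarrow> (\<forall>m\<in>Poly_Mapping.keys p. Poly_Mapping.lookup m i \<le> d)"

lemma var_degree_le_add: "var_degree_le i d p \<Longrightarrow> var_degree_le i d q \<Longrightarrow> var_degree_le i d (p + q)"
  using keys_add[of p q] by (auto simp: var_degree_le_def)

lemma var_degree_le_diff: "var_degree_le i d p \<Longrightarrow> var_degree_le i d q \<Longrightarrow> var_degree_le i d (p - q)"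
  using keys_diff[of p q] by (auto simp: var_degree_le_def)

lemma var_degree_le_mono: "var_degree_le i d p \<Longrightarrow> d \<le> d' \<Longrightarrow> var_degree_le i d' p"
  by (auto simp: var_degree_le_def)

lemma var_degree_le_mult:
  assumes "var_degree_le i d p" "var_degree_le i d' q"
  shows "var_degree_le i (d + d') (p * q)"
  unfolding var_degree_le_def
proof
  fix m assume "m \<in> Poly_Mapping.keys (p * q)"
  then obtain x y where "m = x + y" "x \<in> Poly_Mapping.keys p" "y \<in> Poly_Mapping.keys q"
    using keys_mult by blast
  then show "Poly_Mapping.lookup m i \<le> d + d'"
    using assms by (auto simp: var_degree_le_def lookup_add add_mono)
qed

lemma var_degree_le_power:
  "var_degree_le i d p \<Longrightarrow> var_degree_le i (n * d) (p ^ n :: 'a::comm_ring_1 mpoly)"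
proof (induction n)
  case (Suc n)
  then show ?case using var_degree_le_mult[of i d p "n * d" "p ^ n"] by simp
qed (simp add: var_degree_le_def)

lemma var_degree_le_one: "var_degree_le i d (1 :: 'a::comm_ring_1 mpoly)"
  by (simp add: var_degree_le_def)

lemma var_degree_le_Var:
  "var_degree_le i (if j = i then 1 else 0) (Var j :: 'a::comm_ring_1 mpoly)"
  by (simp add: var_degree_le_def Var_def lookup_single)

lemma var_degree_le_binomial:
  assumes "var_degree_le i 0 (u :: 'a::comm_ring_1 mpoly)"
  shows "var_degree_le i k ((Var i + u) ^ k - u ^ k)"
proof -
  have "var_degree_le i 1 (Var i + u)"
    using var_degree_le_Var[of i i] var_degree_le_mono[OF assms, of 1]
    by (auto intro: var_degree_le_add)
  then have "var_degree_le i k ((Var i + u) ^ k)"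
    using var_degree_le_power[of i 1 _ k] by simp
  moreover have "var_degree_le i k (u ^ k)"
    using var_degree_le_power[OF assms, of k] var_degree_le_mono by fastforce
  ultimately show ?thesis by (rule var_degree_le_diff)
qed

lemma mvars_binomial:
  "mvars ((Var i + u) ^ k - u ^ k :: 'a::comm_ring_1 mpoly) \<subseteq> insert i (mvars u)"
  using mvars_power[of "Var i + u" k] mvars_power[of u k] mvars_add[of "Var i" u]
    mvars_diff[of "(Var i + u) ^ k" "u ^ k"]
  by auto

section \<open>Evaluation\<close>

definition eval_monom :: "(nat \<Rightarrow> 'b::comm_semiring_1) \<Rightarrow> (nat \<Rightarrow>\<^sub>0 nat) \<Rightarrow> 'b" where
  "eval_monom e m = (\<Prod>i\<in>Poly_Mapping.keys m. e i ^ Poly_Mapping.lookup m i)"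

definition eval_mpoly ::
  "('a::comm_ring_1 \<Rightarrow> 'b::comm_ring_1) \<Rightarrow> (nat \<Rightarrow> 'b) \<Rightarrow> 'a mpoly \<Rightarrow> 'b" where
  "eval_mpoly \<kappa> e p = (\<Sum>m\<in>Poly_Mapping.keys p. \<kappa> (Poly_Mapping.lookup p m) * eval_monom e m)"

lemma eval_mpoly_zero [simp]: "eval_mpoly \<kappa> e 0 = 0"
  by (simp add: eval_mpoly_def)

lemma eval_monom_eq_prod:
  assumes "finite S" "Poly_Mapping.keys m \<subseteq> S"
  shows "eval_monom e m = (\<Prod>i\<in>S. e i ^ Poly_Mapping.lookup m i)"
  unfolding eval_monom_def using assms
  by (intro prod.mono_neutral_left) (auto simp: in_keys_iff)

lemma eval_monom_add: "eval_monom e (a + b) = eval_monom e a * eval_monom e b"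
proof -
  let ?S = "Poly_Mapping.keys a \<union> Poly_Mapping.keys b"
  have "eval_monom e (a + b) = (\<Prod>i\<in>?S. e i ^ Poly_Mapping.lookup (a + b) i)"
    by (rule eval_monom_eq_prod) (auto simp: keys_add_nat)
  also have "\<dots> = (\<Prod>i\<in>?S. e i ^ Poly_Mapping.lookup a i) * (\<Prod>i\<in>?S. e i ^ Poly_Mapping.lookup b i)"
    by (simp add: lookup_add power_add prod.distrib)
  also have "\<dots> = eval_monom e a * eval_monom e b"
    by (subst (1 2) eval_monom_eq_prod[of ?S]) auto
  finally show ?thesis .
qed

lemma eval_monom_zero [simp]: "eval_monom e 0 = 1"
  by (simp add: eval_monom_def)

lemma eval_monom_single [simp]: "eval_monom e (Poly_Mapping.single i n) = e i ^ n"
  by (simp add: eval_monom_def)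

locale coeff_hom =
  fixes \<kappa> :: "'a::comm_ring_1 \<Rightarrow> 'b::comm_ring_1"
  assumes hom_zero [simp]: "\<kappa> 0 = 0"
    and hom_one [simp]: "\<kappa> 1 = 1"
    and hom_add: "\<kappa> (a + b) = \<kappa> a + \<kappa> b"
    and hom_mult: "\<kappa> (a * b) = \<kappa> a * \<kappa> b"
begin

lemma eval_mpoly_eq_sum:
  assumes "finite S" "Poly_Mapping.keys p \<subseteq> S"
  shows "eval_mpoly \<kappa> e p = (\<Sum>m\<in>S. \<kappa> (Poly_Mapping.lookup p m) * eval_monom e m)"
  unfolding eval_mpoly_def using assms
  by (intro sum.mono_neutral_left) (auto simp: in_keys_iff)

lemma eval_add: "eval_mpoly \<kappa> e (p + q) = eval_mpoly \<kappa> e p + eval_mpoly \<kappa> e q"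
proof -
  let ?S = "Poly_Mapping.keys p \<union> Poly_Mapping.keys q"
  have "eval_mpoly \<kappa> e (p + q) = (\<Sum>m\<in>?S. \<kappa> (Poly_Mapping.lookup (p + q) m) * eval_monom e m)"
    using keys_add[of p q] by (intro eval_mpoly_eq_sum) auto
  also have "\<dots> = (\<Sum>m\<in>?S. \<kappa> (Poly_Mapping.lookup p m) * eval_monom e m)
                 + (\<Sum>m\<in>?S. \<kappa> (Poly_Mapping.lookup q m) * eval_monom e m)"
    by (simp add: lookup_add hom_add distrib_right sum.distrib)
  also have "\<dots> = eval_mpoly \<kappa> e p + eval_mpoly \<kappa> e q"
    by (subst (1 2) eval_mpoly_eq_sum[of ?S]) auto
  finally show ?thesis .
qed

lemma eval_single: "eval_mpoly \<kappa> e (Poly_Mapping.single m c) = \<kappa> c * eval_monom e m"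
  by (simp add: eval_mpoly_def)

lemma eval_sum: "eval_mpoly \<kappa> e (sum f A) = (\<Sum>a\<in>A. eval_mpoly \<kappa> e (f a))"
  by (induction A rule: infinite_finite_induct) (auto simp: eval_add)

lemma eval_mult: "eval_mpoly \<kappa> e (p * q) = eval_mpoly \<kappa> e p * eval_mpoly \<kappa> e q"
proof -
  let ?P = "Poly_Mapping.keys p" and ?Q = "Poly_Mapping.keys q"
  have "p * q = (\<Sum>m\<in>?P. \<Sum>n\<in>?Q.
      Poly_Mapping.single (m + n) (Poly_Mapping.lookup p m * Poly_Mapping.lookup q n))"
    by (subst (1) mpoly_eq_sum_single[of p], subst (1) mpoly_eq_sum_single[of q])
      (simp add: sum_product mult_single)
  then have "eval_mpoly \<kappa> e (p * q) = (\<Sum>m\<in>?P. \<Sum>n\<in>?Q.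
      (\<kappa> (Poly_Mapping.lookup p m) * eval_monom e m) * (\<kappa> (Poly_Mapping.lookup q n) * eval_monom e n))"
    by (simp add: eval_sum eval_single hom_mult eval_monom_add mult_ac)
  also have "\<dots> = eval_mpoly \<kappa> e p * eval_mpoly \<kappa> e q"
    by (simp add: eval_mpoly_def sum_product)
  finally show ?thesis .
qed

lemma eval_uminus: "eval_mpoly \<kappa> e (- p) = - eval_mpoly \<kappa> e p"
  using eval_add[of e p "- p"] by (simp add: eval_mpoly_def eq_neg_iff_add_eq_0 add.commute)

lemma eval_diff: "eval_mpoly \<kappa> e (p - q) = eval_mpoly \<kappa> e p - eval_mpoly \<kappa> e q"
  using eval_add[of e p "- q"] eval_uminus[of e q] by simp

lemma eval_one: "eval_mpoly \<kappa> e 1 = 1"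
  using eval_single[of e 0 1] by simp

lemma eval_power: "eval_mpoly \<kappa> e (p ^ n) = eval_mpoly \<kappa> e p ^ n"
  by (induction n) (simp_all add: eval_one eval_mult)

lemma eval_Var: "eval_mpoly \<kappa> e (Var i) = e i"
  by (simp add: Var_def eval_single)

end

interpretation fps_const_hom: coeff_hom "fps_const :: 'a::field \<Rightarrow> 'a fps"
  by unfold_locales (simp_all add: fps_const_add)

interpretation const_fps_poly_hom: coeff_hom "\<lambda>c. [:fps_const c:] :: 'a::field fps poly"
  by unfold_locales (simp_all add: fps_const_add mult.commute)

lemma kernel_ideal:
  assumes "coeff_hom \<kappa>"
  shows "ideal {p. mvars p \<subseteq> V \<and> eval_mpoly \<kappa> e p = 0} (poly_ring V)"
proof -
  interpret coeff_hom \<kappa> by (rule assms)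
  interpret cring "poly_ring V :: 'a mpoly ring" by (rule cring_poly_ring)
  show ?thesis
  proof (rule idealI)
    show "ring (poly_ring V :: 'a mpoly ring)" ..
    show "subgroup {p. mvars p \<subseteq> V \<and> eval_mpoly \<kappa> e p = 0} (add_monoid (poly_ring V))"
      by (rule add.subgroupI)
        (auto simp: a_inv_def[symmetric] a_inv_poly_ring eval_uminus eval_add
          dest: subsetD[OF mvars_add] intro: exI[of _ 0])
  qed (auto simp: eval_mult dest: subsetD[OF mvars_mult])
qed

lemma genideal_subset_kernel:
  assumes "coeff_hom \<kappa>" "G \<subseteq> carrier (poly_ring V)" "\<And>g. g \<in> G \<Longrightarrow> eval_mpoly \<kappa> e g = 0"
  shows "genideal (poly_ring V) G \<subseteq> {p. eval_mpoly \<kappa> e p = 0}"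
proof -
  interpret cring "poly_ring V :: 'a::comm_ring_1 mpoly ring" by (rule cring_poly_ring)
  have "G \<subseteq> {p. mvars p \<subseteq> V \<and> eval_mpoly \<kappa> e p = 0}"
    using assms(2,3) by auto
  then show ?thesis
    using genideal_minimal[OF kernel_ideal[OF assms(1)]] by blast
qed

lemma kernel_primeideal:
  fixes \<kappa> :: "'a::comm_ring_1 \<Rightarrow> 'b::idom"
  assumes "coeff_hom \<kappa>"
  shows "primeideal {p. mvars p \<subseteq> V \<and> eval_mpoly \<kappa> e p = 0} (poly_ring V)"
proof -
  interpret coeff_hom \<kappa> by (rule assms)
  show ?thesis
  proof (rule primeidealI)
    show "ideal {p. mvars p \<subseteq> V \<and> eval_mpoly \<kappa> e p = 0} (poly_ring V)"
      by (rule kernel_ideal[OF assms])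
    show "cring (poly_ring V :: 'a mpoly ring)" by (rule cring_poly_ring)
    have "(1 :: 'a mpoly) \<in> carrier (poly_ring V)" "1 \<notin> {p. mvars p \<subseteq> V \<and> eval_mpoly \<kappa> e p = 0}"
      using eval_one[of e] by simp_all
    then show "carrier (poly_ring V) \<noteq> {p. mvars p \<subseteq> V \<and> eval_mpoly \<kappa> e p = 0}"
      by blast
  qed (auto simp: eval_mult)
qed

section \<open>\<open>k\<close>-th roots of power series\<close>

lemma fps_power_nth_cong:
  fixes A B :: "'a::comm_ring_1 fps"
  assumes "\<forall>j\<le>n. A $ j = B $ j"
  shows "(A ^ k) $ n = (B ^ k) $ n"
  using assms
proof (induction k arbitrary: n)
  case (Suc k)
  have "(A ^ Suc k) $ n = (\<Sum>i=0..n. A $ i * (A ^ k) $ (n - i))"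
    by (simp add: fps_mult_nth)
  also have "\<dots> = (\<Sum>i=0..n. B $ i * (B ^ k) $ (n - i))"
    using Suc by (intro sum.cong refl) simp
  also have "\<dots> = (B ^ Suc k) $ n"
    by (simp add: fps_mult_nth)
  finally show ?case .
qed simp

lemma fps_const_mult_X_power_nth: "(fps_const c * fps_X ^ m) $ j = (if j = m then c else 0)"
  by (simp add: fps_X_power_nth del: power_Suc)

text \<open>For the perturbation \<open>B\<close>, \<open>(A + B) ^ k - A ^ k = B S\<close> where \<open>S\<close> has constant term \<open>k\<close>.\<close>

lemma fps_power_add_monom_nth:
  fixes A :: "'a::comm_ring_1 fps"
  assumes "A $ 0 = 1"
  shows "((A + fps_const c * fps_X ^ Suc n) ^ k) $ Suc n = (A ^ k) $ Suc n + of_nat k * c"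
proof (cases k)
  case (Suc m)
  define B where "B = fps_const c * fps_X ^ Suc n"
  define S where "S = (\<Sum>p<Suc m. (A + B) ^ p * A ^ (m - p))"
  have "(A + B) ^ Suc m - A ^ Suc m = ((A + B) - A) * S"
    unfolding S_def by (rule diff_power_eq_sum)
  then have eq: "(A + B) ^ Suc m - A ^ Suc m = fps_const c * (fps_X ^ Suc n * S)"
    by (simp add: B_def mult_ac)
  have "S $ 0 = (\<Sum>p<Suc m. ((A + B) ^ p) $ 0 * (A ^ (m - p)) $ 0)"
    by (simp add: S_def fps_sum_nth)
  also have "\<dots> = of_nat (Suc m)"
    using assms by (simp add: B_def fps_power_zeroth)
  finally have "((A + B) ^ Suc m - A ^ Suc m) $ Suc n = c * of_nat (Suc m)"
    unfolding eq by (simp add: fps_X_power_mult_nth del: power_Suc)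
  then show ?thesis
    unfolding B_def[symmetric] Suc by (simp add: algebra_simps)
qed simp

text \<open>The root of \<open>1 + f\<close> is built one coefficient at a time; \<open>(1 + root_approx k f n) ^ k\<close>
  agrees with \<open>1 + f\<close> up to degree \<open>n\<close>, and each step divides by \<open>k\<close>.\<close>

fun root_approx :: "nat \<Rightarrow> 'a::field fps \<Rightarrow> nat \<Rightarrow> 'a fps" where
  "root_approx k f 0 = 0"
| "root_approx k f (Suc n) = root_approx k f n
     + fps_const (((1 + f) $ Suc n - ((1 + root_approx k f n) ^ k) $ Suc n) / of_nat k) * fps_X ^ Suc n"

lemma root_approx_stable: "m \<le> n \<Longrightarrow> j \<le> m \<Longrightarrow> root_approx k f n $ j = root_approx k f m $ j"
proof (induction n)
  case (Suc n)
  then show ?case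
    by (cases "m \<le> n") (auto simp: fps_const_mult_X_power_nth le_Suc_eq simp del: power_Suc)
qed simp

lemma root_approx_nth_0 [simp]: "root_approx k f n $ 0 = 0"
  by (induction n) simp_all

lemma root_approx_power_nth:
  fixes f :: "'a::field fps"
  assumes "of_nat k \<noteq> (0::'a)" "f $ 0 = 0" "j \<le> n"
  shows "((1 + root_approx k f n) ^ k) $ j = (1 + f) $ j"
  using assms(3)
proof (induction n arbitrary: j)
  case 0
  then show ?case using assms(2) by (simp add: fps_power_zeroth)
next
  case (Suc n)
  show ?case
  proof (cases "j \<le> n")
    case True
    have "((1 + root_approx k f (Suc n)) ^ k) $ j = ((1 + root_approx k f n) ^ k) $ j"
      using True by (intro fps_power_nth_cong) (simp add: fps_const_mult_X_power_nth del: power_Suc)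
    then show ?thesis using Suc True by simp
  next
    case False
    then have "j = Suc n" using Suc.prems by simp
    moreover have "(1 + root_approx k f n) $ 0 = 1" by simp
    ultimately show ?thesis
      using fps_power_add_monom_nth[of "1 + root_approx k f n"] assms(1) by (simp add: add.assoc)
  qed
qed

lemma fps_root_exists:
  fixes f :: "'a::field fps"
  assumes "of_nat k \<noteq> (0::'a)" "f $ 0 = 0"
  shows "\<exists>g. g $ 0 = 0 \<and> (1 + g) ^ k = 1 + f"
proof -
  define g where "g = Abs_fps (\<lambda>j. root_approx k f j $ j)"
  have "((1 + g) ^ k) $ n = ((1 + root_approx k f n) ^ k) $ n" for n
    by (intro fps_power_nth_cong) (simp add: g_def root_approx_stable)
  then have "(1 + g) ^ k = 1 + f"
    using root_approx_power_nth[OF assms] by (simp add: fps_eq_iff)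
  moreover have "g $ 0 = 0" by (simp add: g_def)
  ultimately show ?thesis by blast
qed

lemma subdegree_root:
  fixes f g :: "'a::field fps"
  assumes "(1 + g) ^ k = 1 + f" "of_nat k \<noteq> (0::'a)" "f \<noteq> 0" "g $ 0 = 0"
  shows "g \<noteq> 0" "subdegree g = subdegree f"
proof -
  obtain m where k: "k = Suc m" using assms(2) by (cases k) auto
  define S where "S = (\<Sum>p<Suc m. (1 + g) ^ p * 1 ^ (m - p))"
  have "(1 + g) ^ Suc m - 1 ^ Suc m = ((1 + g) - 1) * S"
    unfolding S_def by (rule diff_power_eq_sum)
  then have f: "f = g * S" using assms(1) k by simp
  have "S $ 0 = of_nat k"
    using assms(4) k by (simp add: S_def fps_sum_nth fps_power_zeroth)
  then have "S \<noteq> 0" "subdegree S = 0"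
    using assms(2) by auto
  moreover show "g \<noteq> 0" using f assms(3) by auto
  ultimately show "subdegree g = subdegree f" using f by simp
qed

definition fps_root1p :: "nat \<Rightarrow> 'a::field fps \<Rightarrow> 'a fps" where
  "fps_root1p k f = (SOME g. g $ 0 = 0 \<and> (1 + g) ^ k = 1 + f)"

lemma fps_root1p:
  fixes f :: "'a::field fps"
  assumes "of_nat k \<noteq> (0::'a)" "f $ 0 = 0"
  shows "fps_root1p k f $ 0 = 0" "(1 + fps_root1p k f) ^ k = 1 + f"
  using someI_ex[OF fps_root_exists[OF assms]] unfolding fps_root1p_def by auto

text \<open>\<open>root_tower k n\<close> is the series \<open>X\<^sub>l\<^sub>-\<^sub>n\<close> of the construction, with \<open>X\<^sub>l = t\<close>.\<close>

fun root_tower :: "nat \<Rightarrow> nat \<Rightarrow> 'a::field fps" where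
  "root_tower k 0 = fps_X"
| "root_tower k (Suc n) = fps_root1p k (root_tower k n ^ k)"

lemma root_tower:
  assumes "of_nat k \<noteq> (0::'a::field)"
  shows "(root_tower k n :: 'a fps) \<noteq> 0" "subdegree (root_tower k n :: 'a fps) = k ^ n"
    "(root_tower k n :: 'a fps) $ 0 = 0"
    "(1 + root_tower k (Suc n) :: 'a fps) ^ k = 1 + root_tower k n ^ k"
proof -
  have "k > 0" using assms by (cases k) auto
  have "(root_tower k n :: 'a fps) \<noteq> 0 \<and> subdegree (root_tower k n :: 'a fps) = k ^ n
      \<and> (root_tower k n :: 'a fps) $ 0 = 0"
  proof (induction n)
    case (Suc n)
    let ?f = "(root_tower k n :: 'a fps) ^ k"
    have f0: "?f $ 0 = 0" using Suc \<open>k > 0\<close> by (simp add: fps_power_zeroth)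
    have "?f \<noteq> 0" using Suc by simp
    with fps_root1p[OF assms f0] subdegree_root[OF fps_root1p(2)[OF assms f0] assms]
    show ?case using Suc by simp
  qed simp
  moreover from this have "((root_tower k n :: 'a fps) ^ k) $ 0 = 0"
    using \<open>k > 0\<close> by (simp add: fps_power_zeroth)
  ultimately show "(root_tower k n :: 'a fps) \<noteq> 0" "subdegree (root_tower k n :: 'a fps) = k ^ n"
    "(root_tower k n :: 'a fps) $ 0 = 0" "(1 + root_tower k (Suc n) :: 'a fps) ^ k = 1 + root_tower k n ^ k"
    using fps_root1p(2)[OF assms] by simp_all
qed

section \<open>Independence of reduced monomials\<close>

text \<open>The point \<open>x\<^sub>i \<mapsto> X\<^sub>i\<close> (and \<open>z \<mapsto> 1\<close>) at which the ideal is the kernel of evaluation.\<close>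

definition root_point :: "nat \<Rightarrow> nat \<Rightarrow> nat \<Rightarrow> 'a::field fps" where
  "root_point k l i = (if i = 0 then 1 else root_tower k (l - i))"

lemma root_point_0 [simp]: "root_point k l 0 = 1"
  by (simp add: root_point_def)

lemma root_point_relation:
  assumes "of_nat k \<noteq> (0::'a::field)" "i \<in> {1..l-1}"
  shows "(1 + root_point k l i :: 'a fps) ^ k = 1 + root_point k l (i + 1) ^ k"
proof -
  have "l - i = Suc (l - (i + 1))" using assms(2) by auto
  then show ?thesis using root_tower(4)[OF assms(1), of "l - (i + 1)"] assms(2)
    by (simp add: root_point_def)
qed

definition reduced_monom :: "nat \<Rightarrow> nat \<Rightarrow> (nat \<Rightarrow>\<^sub>0 nat) \<Rightarrow> bool" where
  "reduced_monom k l a \<longleftrightarrow> (\<forall>j\<in>{2..l}. Poly_Mapping.lookup a j < k)"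

text \<open>The order of \<open>X\<^sub>1\<^bsup>a\<^sub>1\<^esup> \<cdots> X\<^sub>l\<^bsup>a\<^sub>l\<^esup>\<close>; on reduced monomials it reads the digits
  \<open>a\<^sub>2, \<dots>, a\<^sub>l\<close> in base \<open>k\<close>, so it is injective there.\<close>

definition order_weight :: "nat \<Rightarrow> nat \<Rightarrow> (nat \<Rightarrow>\<^sub>0 nat) \<Rightarrow> nat" where
  "order_weight k n a = (\<Sum>i\<in>{1..n}. Poly_Mapping.lookup a i * k ^ (n - i))"

lemma order_weight_Suc:
  "order_weight k (Suc n) a = k * order_weight k n a + Poly_Mapping.lookup a (Suc n)"
proof -
  have "(\<Sum>i\<in>{1..n}. Poly_Mapping.lookup a i * k ^ (Suc n - i)) = k * order_weight k n a"
    unfolding order_weight_def sum_distrib_left by (intro sum.cong refl) (simp add: Suc_diff_le)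
  then show ?thesis by (simp add: order_weight_def)
qed

lemma order_weight_eqD:
  assumes "\<forall>j\<in>{2..n}. Poly_Mapping.lookup a j < k \<and> Poly_Mapping.lookup b j < k"
    and "order_weight k n a = order_weight k n b" "i \<in> {1..n}"
  shows "Poly_Mapping.lookup a i = Poly_Mapping.lookup b i"
  using assms
proof (induction n)
  case (Suc n)
  show ?case
  proof (cases n)
    case 0
    then show ?thesis using Suc.prems by (simp add: order_weight_def)
  next
    case (Suc n')
    have lt: "Poly_Mapping.lookup a (Suc n) < k" "Poly_Mapping.lookup b (Suc n) < k"
      using Suc.prems(1) \<open>n = Suc n'\<close> by auto
    have eq: "k * order_weight k n a + Poly_Mapping.lookup a (Suc n)
            = k * order_weight k n b + Poly_Mapping.lookup b (Suc n)"
      using Suc.prems(2) by (simp add: order_weight_Suc)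
    have last: "Poly_Mapping.lookup a (Suc n) = Poly_Mapping.lookup b (Suc n)"
      using arg_cong[OF eq, of "\<lambda>x. x mod k"] lt by simp
    then have "order_weight k n a = order_weight k n b"
      using eq lt by simp
    then show ?thesis
      using Suc.IH Suc.prems(1,3) last by (cases "i = Suc n") auto
  qed
qed simp

lemma order_weight_inj:
  assumes "Poly_Mapping.keys a \<subseteq> {1..l}" "Poly_Mapping.keys b \<subseteq> {1..l}"
    and "reduced_monom k l a" "reduced_monom k l b" "order_weight k l a = order_weight k l b"
  shows "a = b"
proof (rule poly_mapping_eqI)
  fix i
  show "Poly_Mapping.lookup a i = Poly_Mapping.lookup b i"
  proof (cases "i \<in> {1..l}")
    case True
    then show ?thesis using order_weight_eqD[of l a k b] assms by (auto simp: reduced_monom_def)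
  next
    case False
    then have "i \<notin> Poly_Mapping.keys a" "i \<notin> Poly_Mapping.keys b" using assms(1,2) by auto
    then show ?thesis by (simp add: in_keys_iff)
  qed
qed

context
  fixes k l :: nat
  assumes k: "of_nat k \<noteq> (0::'a::field)"
begin

lemma eval_monom_root_point:
  assumes "Poly_Mapping.keys a \<subseteq> {1..l}"
  shows "(eval_monom (root_point k l) a :: 'a fps) \<noteq> 0"
    "subdegree (eval_monom (root_point k l) a :: 'a fps) = order_weight k l a"
proof -
  have X: "(root_point k l i :: 'a fps) \<noteq> 0" "subdegree (root_point k l i :: 'a fps) = k ^ (l - i)"
    if "i \<in> {1..l}" for i
    using root_tower[OF k, of "l - i"] that by (simp_all add: root_point_def)
  have eq: "(eval_monom (root_point k l) a :: 'a fps)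
          = (\<Prod>i\<in>{1..l}. root_point k l i ^ Poly_Mapping.lookup a i)"
    using assms by (intro eval_monom_eq_prod) auto
  show "(eval_monom (root_point k l) a :: 'a fps) \<noteq> 0"
    unfolding eq using X(1) by simp
  have "subdegree (\<Prod>i\<in>{1..l}. (root_point k l i :: 'a fps) ^ Poly_Mapping.lookup a i)
      = (\<Sum>i\<in>{1..l}. subdegree ((root_point k l i :: 'a fps) ^ Poly_Mapping.lookup a i))"
    using X(1) by (intro subdegree_prod) simp
  also have "\<dots> = order_weight k l a"
    unfolding order_weight_def by (intro sum.cong refl) (simp add: X)
  finally show "subdegree (eval_monom (root_point k l) a :: 'a fps) = order_weight k l a"
    unfolding eq .
qed

text \<open>A nontrivial combination has a unique term of minimal order, which cannot cancel.\<close>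

lemma reduced_monoms_independent:
  assumes "finite T" "inj_on \<beta> T"
    and "\<forall>t\<in>T. Poly_Mapping.keys (\<beta> t) \<subseteq> {1..l} \<and> reduced_monom k l (\<beta> t)"
    and "(\<Sum>t\<in>T. fps_const (c t) * eval_monom (root_point k l) (\<beta> t) :: 'a fps) = 0"
  shows "\<forall>t\<in>T. c t = 0"
proof (rule ccontr)
  let ?w = "\<lambda>t. order_weight k l (\<beta> t)"
  let ?M = "\<lambda>t. eval_monom (root_point k l) (\<beta> t) :: 'a fps"
  assume nonzero: "\<not> (\<forall>t\<in>T. c t = 0)"
  define B where "B = {t\<in>T. c t \<noteq> 0}"
  have B: "finite B" "B \<noteq> {}" using assms(1) nonzero by (auto simp: B_def)
  have "Min (?w ` B) \<in> ?w ` B" using B by simp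
  then obtain t0 where t0: "t0 \<in> B" "?w t0 = Min (?w ` B)" by auto
  have w_less: "?w t0 < ?w t" if "t \<in> B - {t0}" for t
  proof -
    have "?w t0 \<le> ?w t" using t0 B(1) that by simp
    moreover have "?w t \<noteq> ?w t0"
      using that t0(1) order_weight_inj assms(2,3) unfolding B_def inj_on_def by blast
    ultimately show ?thesis by simp
  qed
  have "(\<Sum>t\<in>B. fps_const (c t) * ?M t) = (\<Sum>t\<in>T. fps_const (c t) * ?M t)"
    using assms(1) unfolding B_def by (intro sum.mono_neutral_left) auto
  then have "0 = (\<Sum>t\<in>B. fps_const (c t) * ?M t) $ ?w t0"
    using assms(4) by simp
  also have "\<dots> = (\<Sum>t\<in>B. c t * ?M t $ ?w t0)"
    by (simp add: fps_sum_nth)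
  also have "\<dots> = c t0 * ?M t0 $ ?w t0"
  proof (rule sum.remove[OF B(1) t0(1), THEN trans], simp, rule sum.neutral, intro ballI)
    fix t assume t: "t \<in> B - {t0}"
    then have "?w t0 < subdegree (?M t)"
      using w_less eval_monom_root_point(2) assms(3) unfolding B_def by auto
    then show "c t * ?M t $ ?w t0 = 0" by auto
  qed
  finally have "c t0 * ?M t0 $ ?w t0 = 0" ..
  moreover have "?M t0 $ ?w t0 \<noteq> 0"
    using eval_monom_root_point assms(3) t0(1) unfolding B_def
    by (metis (mono_tags, lifting) mem_Collect_eq nth_subdegree_nonzero)
  ultimately show False using t0(1) unfolding B_def by simp
qed

end

section \<open>Reduction modulo the generators\<close>

definition reduced :: "nat \<Rightarrow> nat \<Rightarrow> 'a::zero mpoly \<Rightarrow> bool" where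
  "reduced k l p \<longleftrightarrow> (\<forall>m\<in>Poly_Mapping.keys p. reduced_monom k l m)"

lemma reduced_sum: "(\<And>a. a \<in> A \<Longrightarrow> reduced k l (f a)) \<Longrightarrow> reduced k l (sum f A)"
  using keys_sum[of f A] unfolding reduced_def by blast

lemma reduced_const_mult: "reduced k l r \<Longrightarrow> reduced k l (Poly_Mapping.single 0 c * r)"
  using keys_const_mult unfolding reduced_def by blast

text \<open>Rewriting \<open>x\<^sub>i\<^sub>+\<^sub>1\<^sup>k\<close> (weight \<open>(i + 1) k\<close>) by terms of weight at most \<open>i k\<close>
  strictly decreases this weight.\<close>

definition reduction_weight :: "nat \<Rightarrow> (nat \<Rightarrow>\<^sub>0 nat) \<Rightarrow> nat" where
  "reduction_weight l a = (\<Sum>j\<in>{2..l}. j * Poly_Mapping.lookup a j)"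

lemma reduction_weight_add:
  "reduction_weight l (a + b) = reduction_weight l a + reduction_weight l b"
  by (simp add: reduction_weight_def lookup_add algebra_simps sum.distrib)

lemma reduction_weight_single:
  assumes "i \<in> {1..l-1}"
  shows "reduction_weight l (Poly_Mapping.single (i + 1) k) = (i + 1) * k"
proof -
  have "reduction_weight l (Poly_Mapping.single (i + 1) k)
      = (\<Sum>j\<in>{2..l}. if j = i + 1 then (i + 1) * k else 0)"
    unfolding reduction_weight_def by (intro sum.cong refl) (auto simp: lookup_single)
  then show ?thesis using assms by auto
qed

lemma not_reduced_monomE:
  assumes "\<not> reduced_monom k l a"
  obtains i b where "i \<in> {1..l-1}" "a = b + Poly_Mapping.single (i + 1) k"
proof -
  from assms obtain j where j: "j \<in> {2..l}" "k \<le> Poly_Mapping.lookup a j"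
    by (auto simp: reduced_monom_def not_less)
  have "a = (a - Poly_Mapping.single j k) + Poly_Mapping.single j k"
    by (rule poly_mapping_eqI) (use j in \<open>auto simp: lookup_add lookup_minus lookup_single when_def\<close>)
  moreover have "j - 1 + 1 = j" "j - 1 \<in> {1..l-1}" using j(1) by auto
  ultimately show thesis using that[of "j - 1"] by metis
qed

locale reduction =
  fixes J :: "'a::comm_ring_1 mpoly set" and V :: "nat set" and k l :: nat
    and G H :: "nat \<Rightarrow> 'a mpoly"
  assumes ideal: "ideal J (poly_ring V)"
    and k: "k > 0"
    and G: "\<And>i. i \<in> {1..l-1} \<Longrightarrow> G i \<in> J"
    and GH: "\<And>i. i \<in> {1..l-1} \<Longrightarrow> Var (i + 1) ^ k = G i + H i"
    and H_carrier: "\<And>i. i \<in> {1..l-1} \<Longrightarrow> mvars (H i) \<subseteq> V"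
    and H_vars: "\<And>i. i \<in> {1..l-1} \<Longrightarrow> mvars (H i) \<subseteq> {0, i}"
    and H_degree: "\<And>i. i \<in> {1..l-1} \<Longrightarrow> var_degree_le i k (H i)"
begin

lemma reduction_weight_H:
  assumes "i \<in> {1..l-1}" "m \<in> Poly_Mapping.keys (H i)"
  shows "reduction_weight l m \<le> i * k"
proof -
  have "reduction_weight l m = (\<Sum>j\<in>{2..l}. if j = i then i * Poly_Mapping.lookup m i else 0)"
    unfolding reduction_weight_def
  proof (intro sum.cong refl)
    fix j assume "j \<in> {2..l}"
    then have "j \<noteq> i \<Longrightarrow> j \<notin> Poly_Mapping.keys m"
      using H_vars[OF assms(1)] assms(2) by (auto simp: mvars_def)
    then show "j * Poly_Mapping.lookup m j = (if j = i then i * Poly_Mapping.lookup m i else 0)"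
      by (auto simp: in_keys_iff)
  qed
  also have "\<dots> \<le> i * Poly_Mapping.lookup m i"
    by (simp add: sum.delta)
  also have "\<dots> \<le> i * k"
    using H_degree[OF assms(1)] assms(2) by (simp add: var_degree_le_def)
  finally show ?thesis .
qed

definition reducible :: "'a mpoly \<Rightarrow> bool" where
  "reducible p \<longleftrightarrow> (\<exists>r. mvars r \<subseteq> V \<and> reduced k l r \<and> p - r \<in> J)"

lemma reducible_sum:
  assumes "\<And>m. m \<in> M \<Longrightarrow> reducible (p m)"
  shows "reducible (\<Sum>m\<in>M. Poly_Mapping.single 0 (c m) * p m)"
proof -
  have "\<forall>m\<in>M. \<exists>r. mvars r \<subseteq> V \<and> reduced k l r \<and> p m - r \<in> J"
    using assms unfolding reducible_def by blast
  then obtain rr where rr: "\<And>m. m \<in> M \<Longrightarrow> mvars (rr m) \<subseteq> V \<and> reduced k l (rr m) \<and> p m - rr m \<in> J"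
    by metis
  let ?r = "\<Sum>m\<in>M. Poly_Mapping.single 0 (c m) * rr m"
  have "mvars ?r \<subseteq> V"
    using mvars_sum mvars_const_mult rr by fast
  moreover have "reduced k l ?r"
    by (intro reduced_sum reduced_const_mult) (use rr in blast)
  moreover have "(\<Sum>m\<in>M. Poly_Mapping.single 0 (c m) * p m) - ?r \<in> J"
  proof -
    have "(\<Sum>m\<in>M. Poly_Mapping.single 0 (c m) * p m) - ?r
        = (\<Sum>m\<in>M. Poly_Mapping.single 0 (c m) * (p m - rr m))"
      by (simp add: right_diff_distrib sum_subtractf)
    also have "\<dots> \<in> J"
    proof (rule poly_ideal_sum[OF ideal])
      fix m assume "m \<in> M"
      then show "Poly_Mapping.single 0 (c m) * (p m - rr m) \<in> J"
        using rr mvars_single[of 0 "c m"] by (intro poly_ideal_mult[OF ideal]) auto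
    qed
    finally show ?thesis .
  qed
  ultimately show ?thesis unfolding reducible_def by blast
qed

lemma reducible_ideal_add:
  assumes "x \<in> J" "reducible y"
  shows "reducible (x + y)"
proof -
  from assms(2) obtain r where r: "mvars r \<subseteq> V" "reduced k l r" "y - r \<in> J"
    unfolding reducible_def by blast
  then show ?thesis
    using poly_ideal_add[OF ideal assms(1) r(3)] unfolding reducible_def
    by (intro exI[of _ r]) (simp add: add_diff_eq)
qed

lemma reducible_monom: "Poly_Mapping.keys a \<subseteq> V \<Longrightarrow> reducible (Poly_Mapping.single a 1)"
proof (induction "reduction_weight l a" arbitrary: a rule: less_induct)
  case less
  show ?case
  proof (cases "reduced_monom k l a")
    case True
    then show ?thesis
      using less.prems mvars_single[of a 1] poly_ideal_zero[OF ideal]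
      unfolding reducible_def by (intro exI[of _ "Poly_Mapping.single a 1"]) (auto simp: reduced_def)
  next
    case False
    then obtain i b where i: "i \<in> {1..l-1}" and ab: "a = b + Poly_Mapping.single (i + 1) k"
      by (rule not_reduced_monomE)
    have b: "Poly_Mapping.keys b \<subseteq> V"
      using less.prems ab by (auto simp: keys_add_nat)
    have weight_a: "reduction_weight l a = reduction_weight l b + (i + 1) * k"
      using reduction_weight_single[OF i] by (simp add: ab reduction_weight_add)
    have IH: "reducible (Poly_Mapping.single (b + m) 1)" if m: "m \<in> Poly_Mapping.keys (H i)" for m
    proof (rule less.hyps)
      show "reduction_weight l (b + m) < reduction_weight l a"
        using reduction_weight_H[OF i(1) m] weight_a k by (simp add: reduction_weight_add)
      show "Poly_Mapping.keys (b + m) \<subseteq> V"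
        using b H_carrier[OF i(1)] m by (auto simp: keys_add_nat mvars_def)
    qed
    have "Poly_Mapping.single b 1 * G i \<in> J"
      using poly_ideal_mult[OF ideal G[OF i(1)]] mvars_single[of b 1] b by blast
    then have "reducible (Poly_Mapping.single b 1 * G i + (\<Sum>m\<in>Poly_Mapping.keys (H i).
        Poly_Mapping.single 0 (Poly_Mapping.lookup (H i) m) * Poly_Mapping.single (b + m) 1))"
      by (rule reducible_ideal_add[OF _ reducible_sum[OF IH]])
    moreover have "Poly_Mapping.single a 1 = Poly_Mapping.single b 1 * G i + (\<Sum>m\<in>Poly_Mapping.keys (H i).
        Poly_Mapping.single 0 (Poly_Mapping.lookup (H i) m) * Poly_Mapping.single (b + m) 1)"
    proof -
      have "Poly_Mapping.single a 1 = Poly_Mapping.single b 1 * Var (i + 1) ^ k"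
        by (simp add: Var_power mult_single ab)
      also have "\<dots> = Poly_Mapping.single b 1 * G i + Poly_Mapping.single b 1 * H i"
        using GH[OF i(1)] by (simp add: distrib_left)
      also have "Poly_Mapping.single b 1 * H i = (\<Sum>m\<in>Poly_Mapping.keys (H i).
          Poly_Mapping.single 0 (Poly_Mapping.lookup (H i) m) * Poly_Mapping.single (b + m) 1)"
        by (subst (1) mpoly_eq_sum_single[of "H i"]) (simp add: sum_distrib_left mult_single)
      finally show ?thesis .
    qed
    ultimately show ?thesis by simp
  qed
qed

lemma reducible_carrier:
  assumes "mvars p \<subseteq> V"
  shows "reducible p"
proof -
  have "reducible (\<Sum>a\<in>Poly_Mapping.keys p.
      Poly_Mapping.single 0 (Poly_Mapping.lookup p a) * Poly_Mapping.single a 1)"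
    using assms by (intro reducible_sum reducible_monom) (auto simp: mvars_def)
  then show ?thesis by (simp add: mult_single flip: mpoly_eq_sum_single)
qed

lemma eq_eval_kernel:
  assumes "coeff_hom \<kappa>" and "J \<subseteq> {p. eval_mpoly \<kappa> e p = 0}"
    and "\<And>r. mvars r \<subseteq> V \<Longrightarrow> reduced k l r \<Longrightarrow> eval_mpoly \<kappa> e r = 0 \<Longrightarrow> r = 0"
  shows "J = {p. mvars p \<subseteq> V \<and> eval_mpoly \<kappa> e p = 0}"
proof
  show "J \<subseteq> {p. mvars p \<subseteq> V \<and> eval_mpoly \<kappa> e p = 0}"
    using assms(2) ideal.Icarr[OF ideal] by fastforce
  show "{p. mvars p \<subseteq> V \<and> eval_mpoly \<kappa> e p = 0} \<subseteq> J"
  proof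
    fix p assume p: "p \<in> {p. mvars p \<subseteq> V \<and> eval_mpoly \<kappa> e p = 0}"
    then have "reducible p" by (simp add: reducible_carrier)
    then obtain r where r: "mvars r \<subseteq> V" "reduced k l r" "p - r \<in> J"
      unfolding reducible_def by blast
    then have "eval_mpoly \<kappa> e r = 0"
      using p assms(2) coeff_hom.eval_diff[OF assms(1), of e p r] by auto
    then have "r = 0" using assms(3) r by blast
    then show "p \<in> J" using r(3) by simp
  qed
qed

end

section \<open>The two ideals\<close>

definition gen_affine :: "nat \<Rightarrow> nat \<Rightarrow> 'a::comm_ring_1 mpoly" where
  "gen_affine k i = Var (i + 1) ^ k + 1 - (Var i + 1) ^ k"

definition gen_homog :: "nat \<Rightarrow> nat \<Rightarrow> 'a::comm_ring_1 mpoly" where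
  "gen_homog k i = Var (i + 1) ^ k + Var 0 ^ k - (Var i + Var 0) ^ k"

lemma mvars_gen_affine: "mvars (gen_affine k i :: 'a::comm_ring_1 mpoly) \<subseteq> {i, i + 1}"
proof -
  have "gen_affine k i = Var (i + 1) ^ k - ((Var i + 1) ^ k - 1 ^ k :: 'a mpoly)"
    by (simp add: gen_affine_def)
  then show ?thesis
    using mvars_diff[of "Var (i + 1) ^ k"] mvars_binomial[of i "1::'a mpoly" k]
      mvars_power[of "Var (i + 1) :: 'a mpoly" k] by fastforce
qed

lemma mvars_gen_homog: "mvars (gen_homog k i :: 'a::comm_ring_1 mpoly) \<subseteq> {0, i, i + 1}"
proof -
  have "gen_homog k i = Var (i + 1) ^ k - ((Var i + Var 0) ^ k - Var 0 ^ k :: 'a mpoly)"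
    by (simp add: gen_homog_def)
  then show ?thesis
    using mvars_diff[of "Var (i + 1) ^ k"] mvars_binomial[of i "Var 0 :: 'a mpoly" k]
      mvars_power[of "Var (i + 1) :: 'a mpoly" k] by fastforce
qed

abbreviation gen_affine_ideal :: "nat \<Rightarrow> nat \<Rightarrow> 'a::comm_ring_1 mpoly set" where
  "gen_affine_ideal k l \<equiv> genideal (poly_ring {1..l}) (gen_affine k ` {1..l-1})"

abbreviation gen_homog_ideal :: "nat \<Rightarrow> nat \<Rightarrow> 'a::comm_ring_1 mpoly set" where
  "gen_homog_ideal k l \<equiv> genideal (poly_ring {0..l}) (gen_homog k ` {1..l-1})"

lemma gen_affine_subset_carrier:
  "gen_affine k ` {1..l-1} \<subseteq> carrier (poly_ring {1..l} :: 'a::comm_ring_1 mpoly ring)"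
  using mvars_gen_affine[where 'a = 'a] by fastforce

lemma gen_homog_subset_carrier:
  "gen_homog k ` {1..l-1} \<subseteq> carrier (poly_ring {0..l} :: 'a::comm_ring_1 mpoly ring)"
  using mvars_gen_homog[where 'a = 'a] by fastforce

lemma reduction_gen_affine:
  assumes "k > 0"
  shows "reduction (gen_affine_ideal k l) {1..l} k l (gen_affine k)
    (\<lambda>i. (Var i + 1) ^ k - 1 ^ k :: 'a::comm_ring_1 mpoly)"
proof (rule reduction.intro)
  interpret cring "poly_ring {1..l} :: 'a mpoly ring" by (rule cring_poly_ring)
  show "ideal (gen_affine_ideal k l) (poly_ring {1..l} :: 'a mpoly ring)"
    by (rule genideal_ideal[OF gen_affine_subset_carrier])
  show "gen_affine k i \<in> (gen_affine_ideal k l :: 'a mpoly set)" if "i \<in> {1..l-1}" for i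
    using genideal_self[OF gen_affine_subset_carrier[of k l]] that by blast
  fix i assume i: "i \<in> {1..l-1}"
  show "mvars ((Var i + 1) ^ k - 1 ^ k :: 'a mpoly) \<subseteq> {1..l}"
    "mvars ((Var i + 1) ^ k - 1 ^ k :: 'a mpoly) \<subseteq> {0, i}"
    using mvars_binomial[of i "1::'a mpoly" k] i by auto
  show "var_degree_le i k ((Var i + 1) ^ k - 1 ^ k :: 'a mpoly)"
    by (rule var_degree_le_binomial[OF var_degree_le_one])
qed (simp_all add: assms gen_affine_def)

lemma reduction_gen_homog:
  assumes "k > 0"
  shows "reduction (gen_homog_ideal k l) {0..l} k l (gen_homog k)
    (\<lambda>i. (Var i + Var 0) ^ k - Var 0 ^ k :: 'a::comm_ring_1 mpoly)"
proof (rule reduction.intro)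
  interpret cring "poly_ring {0..l} :: 'a mpoly ring" by (rule cring_poly_ring)
  show "ideal (gen_homog_ideal k l) (poly_ring {0..l} :: 'a mpoly ring)"
    by (rule genideal_ideal[OF gen_homog_subset_carrier])
  show "gen_homog k i \<in> (gen_homog_ideal k l :: 'a mpoly set)" if "i \<in> {1..l-1}" for i
    using genideal_self[OF gen_homog_subset_carrier[of k l]] that by blast
  fix i assume i: "i \<in> {1..l-1}"
  show "mvars ((Var i + Var 0) ^ k - Var 0 ^ k :: 'a mpoly) \<subseteq> {0..l}"
    "mvars ((Var i + Var 0) ^ k - Var 0 ^ k :: 'a mpoly) \<subseteq> {0, i}"
    using mvars_binomial[of i "Var 0 :: 'a mpoly" k] i by auto
  show "var_degree_le i k ((Var i + Var 0) ^ k - Var 0 ^ k :: 'a mpoly)"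
    using var_degree_le_Var[of i 0] i by (intro var_degree_le_binomial) simp
qed (simp_all add: assms gen_homog_def)

lemma eval_root_point_gen_affine:
  assumes "of_nat k \<noteq> (0::'a::field)" "i \<in> {1..l-1}"
  shows "eval_mpoly fps_const (root_point k l) (gen_affine k i :: 'a mpoly) = 0"
  using root_point_relation[OF assms]
  by (simp add: gen_affine_def fps_const_hom.eval_diff fps_const_hom.eval_add
      fps_const_hom.eval_power fps_const_hom.eval_one fps_const_hom.eval_Var add.commute)

lemma eval_root_point_reduced_eq_0:
  fixes r :: "'a::field mpoly"
  assumes "of_nat k \<noteq> (0::'a)" "mvars r \<subseteq> {1..l}" "reduced k l r"
    and "eval_mpoly fps_const (root_point k l) r = 0"
  shows "r = 0"
proof -
  have "\<forall>a\<in>Poly_Mapping.keys r. Poly_Mapping.lookup r a = 0"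
    using reduced_monoms_independent[OF assms(1), of "Poly_Mapping.keys r" id l "Poly_Mapping.lookup r"]
      assms(2-4)
    by (auto simp: eval_mpoly_def reduced_def mvars_def)
  then show "r = 0" by (auto simp: in_keys_iff intro: poly_mapping_eqI)
qed

lemma gen_affine_ideal_eq_kernel:
  assumes k_nonzero: "of_nat k \<noteq> (0::'a::field)"
  shows "gen_affine_ideal k l
    = {p :: 'a mpoly. mvars p \<subseteq> {1..l} \<and> eval_mpoly fps_const (root_point k l) p = 0}"
proof -
  have "k > 0" using k_nonzero by (cases k) auto
  interpret reduction "gen_affine_ideal k l" "{1..l}" k l "gen_affine k"
    "\<lambda>i. (Var i + 1) ^ k - 1 ^ k :: 'a mpoly"
    by (rule reduction_gen_affine[OF \<open>k > 0\<close>])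
  show ?thesis
  proof (rule eq_eval_kernel[OF fps_const_hom.coeff_hom_axioms])
    show "gen_affine_ideal k l \<subseteq> {p :: 'a mpoly. eval_mpoly fps_const (root_point k l) p = 0}"
      using eval_root_point_gen_affine[OF k_nonzero]
      by (intro genideal_subset_kernel[OF fps_const_hom.coeff_hom_axioms gen_affine_subset_carrier]) blast
  qed (rule eval_root_point_reduced_eq_0[OF k_nonzero])
qed

text \<open>The homogeneous ideal is the kernel of \<open>x\<^sub>i \<mapsto> X\<^sub>i s, z \<mapsto> s\<close> into \<open>\<bbbF>[[t]][s]\<close>;
  a monomial of degree \<open>d\<close> lands in \<open>s\<^sup>d\<close>.\<close>

definition homog_point :: "nat \<Rightarrow> nat \<Rightarrow> nat \<Rightarrow> 'a::field fps poly" where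
  "homog_point k l i = monom (root_point k l i) 1"

lemma eval_monom_monom:
  "eval_monom (\<lambda>i. monom (f i) 1) a = monom (eval_monom f a) (mon_deg a)"
proof -
  have "(\<Prod>i\<in>S. monom (f i) 1 ^ n i) = monom (\<Prod>i\<in>S. f i ^ n i) (\<Sum>i\<in>S. n i)" for S n
    by (induction S rule: infinite_finite_induct) (simp_all add: monom_power mult_monom)
  then show ?thesis unfolding eval_monom_def mon_deg_def .
qed

lemma coeff_eval_homog_point:
  "coeff (eval_mpoly (\<lambda>c. [:fps_const c:]) (homog_point k l) r) d
     = (\<Sum>a\<in>{a\<in>Poly_Mapping.keys r. mon_deg a = d}.
          fps_const (Poly_Mapping.lookup r a) * eval_monom (root_point k l) a)"
proof -
  have "eval_mpoly (\<lambda>c. [:fps_const c:]) (homog_point k l) r = (\<Sum>a\<in>Poly_Mapping.keys r.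
      monom (fps_const (Poly_Mapping.lookup r a) * eval_monom (root_point k l) a) (mon_deg a))"
    unfolding eval_mpoly_def homog_point_def eval_monom_monom by (simp add: smult_monom)
  then show ?thesis
    by (simp add: coeff_sum coeff_monom sum.inter_filter[symmetric] if_distrib eq_commute)
qed

definition remove_z :: "(nat \<Rightarrow>\<^sub>0 nat) \<Rightarrow> (nat \<Rightarrow>\<^sub>0 nat)" where
  "remove_z a = a - Poly_Mapping.single 0 (Poly_Mapping.lookup a 0)"

lemma lookup_remove_z:
  "Poly_Mapping.lookup (remove_z a) i = (if i = 0 then 0 else Poly_Mapping.lookup a i)"
  by (simp add: remove_z_def lookup_minus lookup_single when_def)

lemma remove_z_add_z: "a = remove_z a + Poly_Mapping.single 0 (Poly_Mapping.lookup a 0)"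
  by (rule poly_mapping_eqI) (simp add: lookup_add lookup_remove_z lookup_single when_def)

lemma keys_remove_z: "Poly_Mapping.keys (remove_z a) = Poly_Mapping.keys a - {0}"
  by (auto simp: in_keys_iff lookup_remove_z split: if_splits)

lemma eval_monom_remove_z: "X 0 = 1 \<Longrightarrow> eval_monom X (remove_z a) = eval_monom X a"
  by (subst (2) remove_z_add_z) (simp add: eval_monom_add)

lemma remove_z_inj:
  assumes "remove_z a = remove_z b" "mon_deg a = mon_deg b"
  shows "a = b"
proof -
  have "mon_deg a = mon_deg (remove_z a) + Poly_Mapping.lookup a 0"
    "mon_deg b = mon_deg (remove_z b) + Poly_Mapping.lookup b 0"
    by (subst remove_z_add_z, simp add: mon_deg_add)+
  then have "Poly_Mapping.lookup a 0 = Poly_Mapping.lookup b 0" using assms by simp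
  then show ?thesis using assms(1) remove_z_add_z[of a] remove_z_add_z[of b] by metis
qed

lemma eval_homog_point_gen_homog:
  assumes "of_nat k \<noteq> (0::'a::field)" "i \<in> {1..l-1}"
  shows "eval_mpoly (\<lambda>c. [:fps_const c:]) (homog_point k l) (gen_homog k i :: 'a mpoly) = 0"
proof -
  have "eval_mpoly (\<lambda>c. [:fps_const c:]) (homog_point k l) (gen_homog k i :: 'a mpoly)
      = monom (root_point k l (i + 1) ^ k + 1 - (root_point k l i + 1) ^ k) k"
    by (simp add: gen_homog_def const_fps_poly_hom.eval_diff const_fps_poly_hom.eval_add
        const_fps_poly_hom.eval_power const_fps_poly_hom.eval_Var homog_point_def
        add_monom monom_power diff_monom)
  then show ?thesis
    using root_point_relation[OF assms] by (simp add: add.commute)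
qed

lemma eval_homog_point_reduced_eq_0:
  fixes r :: "'a::field mpoly"
  assumes k_nonzero: "of_nat k \<noteq> (0::'a)" and r: "mvars r \<subseteq> {0..l}" "reduced k l r"
    and eval: "eval_mpoly (\<lambda>c. [:fps_const c:]) (homog_point k l) r = 0"
  shows "r = 0"
proof -
  have "Poly_Mapping.lookup r a = 0" if a: "a \<in> Poly_Mapping.keys r" for a
  proof -
    define S where "S = {b\<in>Poly_Mapping.keys r. mon_deg b = mon_deg a}"
    have "(\<Sum>b\<in>S. fps_const (Poly_Mapping.lookup r b) * eval_monom (root_point k l) (remove_z b))
        = (0 :: 'a fps)"
      using coeff_eval_homog_point[of k l r "mon_deg a"] eval
      by (simp add: S_def eval_monom_remove_z)
    moreover have "inj_on remove_z S"
      by (auto simp: S_def inj_on_def intro: remove_z_inj)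
    moreover have "\<forall>b\<in>S. Poly_Mapping.keys (remove_z b) \<subseteq> {1..l} \<and> reduced_monom k l (remove_z b)"
      using r by (auto simp: S_def keys_remove_z reduced_def reduced_monom_def lookup_remove_z mvars_def)
    ultimately show ?thesis
      using reduced_monoms_independent[OF k_nonzero, of S remove_z l "Poly_Mapping.lookup r"] a
      by (simp add: S_def)
  qed
  then show "r = 0" by (intro poly_mapping_eqI) (metis in_keys_iff lookup_zero)
qed

lemma gen_homog_ideal_eq_kernel:
  assumes k_nonzero: "of_nat k \<noteq> (0::'a::field)"
  shows "gen_homog_ideal k l = {p :: 'a mpoly. mvars p \<subseteq> {0..l}
    \<and> eval_mpoly (\<lambda>c. [:fps_const c:]) (homog_point k l) p = 0}"
proof -
  have "k > 0" using k_nonzero by (cases k) auto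
  interpret reduction "gen_homog_ideal k l" "{0..l}" k l "gen_homog k"
    "\<lambda>i. (Var i + Var 0) ^ k - Var 0 ^ k :: 'a mpoly"
    by (rule reduction_gen_homog[OF \<open>k > 0\<close>])
  show ?thesis
  proof (rule eq_eval_kernel[OF const_fps_poly_hom.coeff_hom_axioms])
    show "gen_homog_ideal k l
        \<subseteq> {p :: 'a mpoly. eval_mpoly (\<lambda>c. [:fps_const c:]) (homog_point k l) p = 0}"
      using eval_homog_point_gen_homog[OF k_nonzero]
      by (intro genideal_subset_kernel[OF const_fps_poly_hom.coeff_hom_axioms gen_homog_subset_carrier]) blast
  qed (rule eval_homog_point_reduced_eq_0[OF k_nonzero])
qed

lemma primeideal_gen_affine_ideal:
  assumes "of_nat k \<noteq> (0::'a::field)"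
  shows "primeideal (gen_affine_ideal k l :: 'a mpoly set) (poly_ring {1..l})"
  unfolding gen_affine_ideal_eq_kernel[OF assms]
  by (rule kernel_primeideal[OF fps_const_hom.coeff_hom_axioms])

lemma primeideal_gen_homog_ideal:
  assumes "of_nat k \<noteq> (0::'a::field)"
  shows "primeideal (gen_homog_ideal k l :: 'a mpoly set) (poly_ring {0..l})"
  unfolding gen_homog_ideal_eq_kernel[OF assms]
  by (rule kernel_primeideal[OF const_fps_poly_hom.coeff_hom_axioms])

section \<open>Homogenization\<close>

definition map_monoms :: "((nat \<Rightarrow>\<^sub>0 nat) \<Rightarrow> (nat \<Rightarrow>\<^sub>0 nat)) \<Rightarrow> 'a::comm_ring_1 mpoly \<Rightarrow> 'a mpoly" where
  "map_monoms h p = (\<Sum>m\<in>Poly_Mapping.keys p. Poly_Mapping.single (h m) (Poly_Mapping.lookup p m))"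

lemma homogenize_eq_map_monoms:
  "homogenize p = map_monoms (\<lambda>m. m + Poly_Mapping.single 0 (total_deg p - mon_deg m)) p"
  by (simp add: homogenize_def map_monoms_def)

lemma map_monoms_zero [simp]: "map_monoms h 0 = 0"
  by (simp add: map_monoms_def)

lemma map_monoms_add: "map_monoms h (p + q) = map_monoms h p + map_monoms h q"
  unfolding map_monoms_def by (rule setsum_keys_plus_distrib) (simp_all add: single_add)

lemma map_monoms_diff: "map_monoms h (p - q) = map_monoms h p - map_monoms h q"
proof -
  have "map_monoms h (p - q) + map_monoms h q = map_monoms h p"
    by (simp flip: map_monoms_add)
  then show ?thesis by (simp add: eq_diff_eq)
qed

lemma map_monoms_sum: "map_monoms h (sum f A) = (\<Sum>a\<in>A. map_monoms h (f a))"
  by (induction A rule: infinite_finite_induct) (auto simp: map_monoms_add)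

lemma map_monoms_single: "map_monoms h (Poly_Mapping.single m c) = Poly_Mapping.single (h m) c"
  by (simp add: map_monoms_def)

lemma mon_deg_le_total_deg: "m \<in> Poly_Mapping.keys p \<Longrightarrow> mon_deg m \<le> total_deg p"
  by (auto simp: total_deg_def)

lemma total_deg_eqI:
  assumes "\<And>m. m \<in> Poly_Mapping.keys p \<Longrightarrow> mon_deg m \<le> d"
    and "m0 \<in> Poly_Mapping.keys p" "mon_deg m0 = d"
  shows "total_deg p = d"
proof -
  have "Max (mon_deg ` Poly_Mapping.keys p) = d"
    using assms by (intro Max_eqI) auto
  then show ?thesis using assms(2) by (auto simp: total_deg_def)
qed

lemma keys_homogenize:
  "Poly_Mapping.keys (homogenize p)
     \<subseteq> (\<lambda>m. m + Poly_Mapping.single 0 (total_deg p - mon_deg m)) ` Poly_Mapping.keys p"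
proof -
  have "Poly_Mapping.keys (homogenize p) \<subseteq> (\<Union>m\<in>Poly_Mapping.keys p. Poly_Mapping.keys
      (Poly_Mapping.single (m + Poly_Mapping.single 0 (total_deg p - mon_deg m)) (Poly_Mapping.lookup p m)))"
    unfolding homogenize_def by (rule keys_sum)
  then show ?thesis by (auto split: if_splits)
qed

lemma mvars_homogenize: "mvars (homogenize p) \<subseteq> insert 0 (mvars p)"
  using keys_homogenize[of p] by (fastforce simp: mvars_def keys_add_nat split: if_splits)

lemma homogeneous_homogenize: "homogeneous (homogenize p)"
proof -
  have deg: "mon_deg m = total_deg p" if "m \<in> Poly_Mapping.keys (homogenize p)" for m
    using keys_homogenize[of p] that mon_deg_le_total_deg[of _ p] by (auto simp: mon_deg_add)
  show ?thesis
  proof (cases "homogenize p = 0")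
    case False
    then obtain m where "m \<in> Poly_Mapping.keys (homogenize p)"
      by (metis ex_in_conv keys_eq_empty)
    then have "total_deg (homogenize p) = total_deg p"
      using deg by (intro total_deg_eqI) auto
    then show ?thesis using deg by (simp add: homogeneous_def)
  qed (simp add: homogeneous_def)
qed

text \<open>Under \<open>x\<^sub>i \<mapsto> X\<^sub>i s, z \<mapsto> s\<close> every monomial of \<open>homogenize p\<close> picks up the same
  power \<open>s\<^bsup>deg p\<^esup>\<close>, so affine kernel elements homogenize into the homogeneous kernel.\<close>

lemma eval_homogenize:
  "eval_mpoly (\<lambda>c. [:fps_const c:]) (homog_point k l) (homogenize p)
     = monom (eval_mpoly fps_const (root_point k l) p :: 'a::field fps) (total_deg p)"
proof -
  let ?D = "total_deg p"
  have "eval_mpoly (\<lambda>c. [:fps_const c:]) (homog_point k l) (homogenize p)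
      = (\<Sum>m\<in>Poly_Mapping.keys p. monom (fps_const (Poly_Mapping.lookup p m)
          * eval_monom (root_point k l) m) ?D)"
    unfolding homogenize_def const_fps_poly_hom.eval_sum
  proof (intro sum.cong refl)
    fix m assume m: "m \<in> Poly_Mapping.keys p"
    have "eval_monom (homog_point k l) (m + Poly_Mapping.single 0 (?D - mon_deg m))
        = monom (eval_monom (root_point k l) m :: 'a fps) (mon_deg m) * monom 1 (?D - mon_deg m)"
      unfolding eval_monom_add homog_point_def eval_monom_monom by simp
    also have "\<dots> = monom (eval_monom (root_point k l) m) ?D"
      using mon_deg_le_total_deg[OF m] by (simp add: mult_monom)
    finally show "eval_mpoly (\<lambda>c. [:fps_const c:]) (homog_point k l)
        (Poly_Mapping.single (m + Poly_Mapping.single 0 (?D - mon_deg m)) (Poly_Mapping.lookup p m))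
        = monom (fps_const (Poly_Mapping.lookup p m) * eval_monom (root_point k l) m) ?D"
      by (simp add: const_fps_poly_hom.eval_single smult_monom)
  qed
  also have "\<dots> = monom (eval_mpoly fps_const (root_point k l) p) ?D"
    by (simp add: eval_mpoly_def monom_sum)
  finally show ?thesis .
qed

lemma gen_affine_expand:
  "(gen_affine k i :: 'a::comm_ring_1 mpoly)
     = Poly_Mapping.single (Poly_Mapping.single (i + 1) k) 1 + Poly_Mapping.single 0 1
       - (\<Sum>j\<le>k. Poly_Mapping.single (Poly_Mapping.single i j) (of_nat (k choose j)))"
proof -
  have "(Var i + 1 :: 'a mpoly) ^ k = (\<Sum>j\<le>k. of_nat (k choose j) * Var i ^ j * 1 ^ (k - j))"
    by (rule binomial_ring)
  also have "\<dots> = (\<Sum>j\<le>k. Poly_Mapping.single (Poly_Mapping.single i j) (of_nat (k choose j)))"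
    by (simp add: Var_power of_nat_single_mult)
  finally show ?thesis by (simp add: gen_affine_def Var_power)
qed

lemma gen_homog_expand:
  "(gen_homog k i :: 'a::comm_ring_1 mpoly)
     = Poly_Mapping.single (Poly_Mapping.single (i + 1) k) 1 + Poly_Mapping.single (Poly_Mapping.single 0 k) 1
       - (\<Sum>j\<le>k. Poly_Mapping.single (Poly_Mapping.single i j + Poly_Mapping.single 0 (k - j))
                    (of_nat (k choose j)))"
proof -
  have "(Var i + Var 0 :: 'a mpoly) ^ k = (\<Sum>j\<le>k. of_nat (k choose j) * Var i ^ j * Var 0 ^ (k - j))"
    by (rule binomial_ring)
  also have "\<dots> = (\<Sum>j\<le>k. Poly_Mapping.single (Poly_Mapping.single i j + Poly_Mapping.single 0 (k - j))
                    (of_nat (k choose j)))"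
    by (simp add: Var_power mult_single mult.assoc of_nat_single_mult)
  finally show ?thesis by (simp add: gen_homog_def Var_power)
qed

lemma total_deg_gen_affine:
  assumes "k > 0"
  shows "total_deg (gen_affine k i :: 'a::comm_ring_1 mpoly) = k"
proof (rule total_deg_eqI)
  let ?A = "Poly_Mapping.single (i + 1) k"
  let ?B = "\<Sum>j\<le>k. Poly_Mapping.single (Poly_Mapping.single i j) (of_nat (k choose j)) :: 'a mpoly"
  have B: "Poly_Mapping.keys ?B \<subseteq> Poly_Mapping.single i ` {..k}"
    using keys_sum[of "\<lambda>j. Poly_Mapping.single (Poly_Mapping.single i j) (of_nat (k choose j)) :: 'a mpoly" "{..k}"]
    by auto
  then have "Poly_Mapping.keys (gen_affine k i :: 'a mpoly) \<subseteq> {?A, 0} \<union> Poly_Mapping.single i ` {..k}"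
    unfolding gen_affine_expand
    using keys_diff[of "Poly_Mapping.single ?A 1 + Poly_Mapping.single 0 1" ?B]
      keys_add[of "Poly_Mapping.single ?A 1 :: 'a mpoly" "Poly_Mapping.single 0 1"]
    by auto
  then show "mon_deg m \<le> k" if "m \<in> Poly_Mapping.keys (gen_affine k i :: 'a mpoly)" for m
    using that by auto
  have "?A \<noteq> Poly_Mapping.single i j" "?A \<noteq> 0" for j
    using assms by (auto simp: lookup_single dest!: arg_cong[where f = "\<lambda>m. Poly_Mapping.lookup m (i + 1)"])
  then have "?A \<notin> Poly_Mapping.keys ?B" "?A \<noteq> 0"
    using B by auto
  then have "Poly_Mapping.lookup (gen_affine k i :: 'a mpoly) ?A = 1"
    unfolding gen_affine_expand by (simp add: lookup_minus lookup_add lookup_single lookup_one in_keys_iff)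
  then show "?A \<in> Poly_Mapping.keys (gen_affine k i :: 'a mpoly)"
    by (simp add: in_keys_iff)
qed simp

lemma homogenize_gen_affine:
  assumes "k > 0"
  shows "homogenize (gen_affine k i :: 'a::comm_ring_1 mpoly) = gen_homog k i"
proof -
  have "homogenize (gen_affine k i :: 'a mpoly)
      = map_monoms (\<lambda>m. m + Poly_Mapping.single 0 (k - mon_deg m)) (gen_affine k i)"
    unfolding homogenize_eq_map_monoms total_deg_gen_affine[OF assms] ..
  also have "\<dots> = gen_homog k i"
    using map_monoms_single[of _ 0 "1::'a"]
    unfolding gen_affine_expand gen_homog_expand
    by (simp add: map_monoms_add map_monoms_diff map_monoms_sum map_monoms_single)
  finally show ?thesis .
qed

lemma homogeneous_ideal_gen_homog_ideal:
  assumes "k > 0"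
  shows "homogeneous_ideal (poly_ring {0..l}) (gen_homog_ideal k l :: 'a::comm_ring_1 mpoly set)"
  unfolding homogeneous_ideal_def
proof (intro conjI exI[of _ "gen_homog k ` {1..l-1}"])
  interpret cring "poly_ring {0..l} :: 'a mpoly ring" by (rule cring_poly_ring)
  show "ideal (gen_homog_ideal k l) (poly_ring {0..l} :: 'a mpoly ring)"
    by (rule genideal_ideal[OF gen_homog_subset_carrier])
  show "\<forall>g\<in>gen_homog k ` {1..l-1}. homogeneous (g :: 'a mpoly)"
    by (simp add: homogeneous_homogenize flip: homogenize_gen_affine[OF assms])
qed (use gen_homog_subset_carrier[of k l] in auto)

lemma gen_homog_ideal_eq_homogenization:
  assumes k_nonzero: "of_nat k \<noteq> (0::'a::field)"
  shows "(gen_homog_ideal k l :: 'a mpoly set)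
           = homogenization_ideal (poly_ring {0..l}) (gen_affine_ideal k l)"
proof -
  interpret cring "poly_ring {0..l} :: 'a mpoly ring" by (rule cring_poly_ring)
  have "k > 0" using k_nonzero by (cases k) auto
  have homogenize_subset: "homogenize ` gen_affine_ideal k l \<subseteq> (gen_homog_ideal k l :: 'a mpoly set)"
  proof
    fix x :: "'a mpoly" assume "x \<in> homogenize ` gen_affine_ideal k l"
    then obtain f :: "'a mpoly" where
      f: "mvars f \<subseteq> {1..l}" "eval_mpoly fps_const (root_point k l) f = 0" "x = homogenize f"
      unfolding gen_affine_ideal_eq_kernel[OF k_nonzero] by blast
    then show "x \<in> gen_homog_ideal k l"
      unfolding gen_homog_ideal_eq_kernel[OF k_nonzero]
      using mvars_homogenize[of f] by (fastforce simp: eval_homogenize)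
  qed
  then have carrier: "homogenize ` gen_affine_ideal k l \<subseteq> carrier (poly_ring {0..l} :: 'a mpoly ring)"
    using ideal.Icarr[OF genideal_ideal[OF gen_homog_subset_carrier]] by blast
  have "gen_homog k ` {1..l-1} \<subseteq> homogenize ` (gen_affine_ideal k l :: 'a mpoly set)"
  proof (rule image_subsetI)
    fix i assume "i \<in> {1..l-1}"
    then have "gen_affine k i \<in> (gen_affine_ideal k l :: 'a mpoly set)"
      by (rule reduction.G[OF reduction_gen_affine[OF \<open>k > 0\<close>]])
    then show "gen_homog k i \<in> homogenize ` (gen_affine_ideal k l :: 'a mpoly set)"
      using homogenize_gen_affine[OF \<open>k > 0\<close>, of i] by (metis image_eqI)
  qed
  then show ?thesis
    unfolding homogenization_ideal_def
    using genideal_self[OF carrier] homogenize_subset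
    by (intro equalityI genideal_minimal[OF genideal_ideal[OF carrier]]
        genideal_minimal[OF genideal_ideal[OF gen_homog_subset_carrier]]) auto
qed

lemma of_nat_card_UNIV_eq_0: "of_nat (card (UNIV :: 'a set)) = (0::'a::{finite,ring_1})"
proof -
  have "(\<Sum>x\<in>UNIV. x) = (\<Sum>x\<in>UNIV. (x + 1::'a))"
    by (rule sum.reindex_bij_witness[of _ "\<lambda>x. x + 1" "\<lambda>x. x - 1"]) auto
  then show ?thesis by (simp add: sum.distrib)
qed

lemma of_nat_card_UNIV_minus_1: "of_nat (card (UNIV :: 'a set) - 1) = (- 1 :: 'a::{finite,ring_1})"
proof -
  have "1 \<le> card (UNIV :: 'a set)" by (simp add: Suc_le_eq card_gt_0_iff)
  then show ?thesis by (simp add: of_nat_diff of_nat_card_UNIV_eq_0)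
qed

theorem proposition3p1:
  fixes l :: nat
  assumes "card (UNIV :: 'a set) > 2"
    and "l > 1"
  defines "q \<equiv> card (UNIV :: 'a set)"
  shows "primeideal
           (genideal (poly_ring {1..l})
              ((\<lambda>i. (Var (i+1)) ^ (q-1) + 1 - (Var i + 1) ^ (q-1) :: ('a::{finite,field}) mpoly) ` {1..l-1}))
           (poly_ring {1..l})
       \<and> homogeneous_ideal (poly_ring {0..l})
           (genideal (poly_ring {0..l})
              ((\<lambda>i. (Var (i+1)) ^ (q-1) + (Var 0) ^ (q-1) - (Var i + Var 0) ^ (q-1) :: 'a mpoly) ` {1..l-1}))
       \<and> primeideal
           (genideal (poly_ring {0..l})
              ((\<lambda>i. (Var (i+1)) ^ (q-1) + (Var 0) ^ (q-1) - (Var i + Var 0) ^ (q-1) :: 'a mpoly) ` {1..l-1}))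
           (poly_ring {0..l})
       \<and> genideal (poly_ring {0..l})
              ((\<lambda>i. (Var (i+1)) ^ (q-1) + (Var 0) ^ (q-1) - (Var i + Var 0) ^ (q-1) :: 'a mpoly) ` {1..l-1})
         = homogenization_ideal (poly_ring {0..l})
             (genideal (poly_ring {1..l})
              ((\<lambda>i. (Var (i+1)) ^ (q-1) + 1 - (Var i + 1) ^ (q-1) :: 'a mpoly) ` {1..l-1}))"
proof -
  define k where "k = q - 1"
  have k_nonzero: "of_nat k \<noteq> (0::'a)"
    unfolding k_def q_def of_nat_card_UNIV_minus_1 by simp
  then have "k > 0" by (cases k) auto
  have generators:
    "(\<lambda>i. Var (i+1) ^ (q-1) + 1 - (Var i + 1) ^ (q-1) :: 'a mpoly) = gen_affine k"
    "(\<lambda>i. Var (i+1) ^ (q-1) + Var 0 ^ (q-1) - (Var i + Var 0) ^ (q-1) :: 'a mpoly) = gen_homog k"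
    by (simp_all add: fun_eq_iff gen_affine_def gen_homog_def k_def)
  show ?thesis
    unfolding generators
    by (intro conjI primeideal_gen_affine_ideal primeideal_gen_homog_ideal
        homogeneous_ideal_gen_homog_ideal gen_homog_ideal_eq_homogenization k_nonzero \<open>k > 0\<close>)
qed

end
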